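(* Let $L$ be an $R_0$-algebra, $k\in[0,1)$, and $\mu:L\to[0,1]$ a fuzzy subset. Then $\mu$ is an $(\in,\in\vee q_k)$-fuzzy fated filter of $L$ if and only if for every $t\in(0,\tfrac{1-k}{2}]$ the level set $U(\mu;t)=\{x\in L\mid \mu(x)\ge t\}$ is either empty or a fated filter of $L$.
   Context: An $R_0$-algebra is a bounded distributive lattice $(L,\wedge,\vee,0,1)$ with an order-reversing involution $\neg$ and a binary operation $\to$ such that for all $x,y,z\in L$: $x\to y=\neg y\to\neg x$; $1\to x=x$; $(y\to z)\wedge((x\to y)\to(x\to z))=y\to z$; $x\to(y\to z)=y\to(x\to z)$; $x\to(y\vee z)=(x\to y)\vee(x\to z)$; $(x\to y)\vee((x\to y)\to(\neg x\vee y))=1$. A fated filter of $L$ is a nonempty subset $A\subseteq L$ with $1\in A$ such that for all $x,y\in L$ and $a\in A$, $a\to((x\to y)\to x)\in A$ implies $x\in A$. For $x\in L$, $t\in(0,1]$: $x_t\in\mu$ iff $\mu(x)\ge t$; $x_t\,q_k\,\mu$ iff $\mu(x)+t+k>1$; $x_t\in\vee q_k\,\mu$ iff $x_t\in\mu$ or $x_t\,q_k\,\mu$. $\mu$ is an $(\in,\in\vee q_k)$-fuzzy fated filter of $L$ if (1) for all $x\in L$, $t\in(0,1]$: $x_t\in\mu\Rightarrow 1_t\in\vee q_k\,\mu$; and (2) for all $x,a,y\in L$, $t,s\in(0,1]$: if $(a\to((x\to y)\to x))_t\in\mu$ and $a_s\in\mu$ then $x_{\min\{t,s\}}\in\vee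 q_k\,\mu$. *)

theory Defs
  imports Complex_Main
begin

definition R0_algebra :: "('a::{distrib_lattice,bounded_lattice} \<Rightarrow> 'a) \<Rightarrow> ('a \<Rightarrow> 'a \<Rightarrow> 'a) \<Rightarrow> bool" where
  "R0_algebra neg imp \<longleftrightarrow>
     (\<forall>x. neg (neg x) = x) \<and>
     (\<forall>x y. x \<le> y \<longrightarrow> neg y \<le> neg x) \<and>
     (\<forall>x y. imp x y = imp (neg y) (neg x)) \<and>
     (\<forall>x. imp top x = x) \<and>
     (\<forall>x y z. inf (imp y z) (imp (imp x y) (imp x z)) = imp y z) \<and>
     (\<forall>x y z. imp x (imp y z) = imp y (imp x z)) \<and>
     (\<forall>x y z. imp x (sup y z) = sup (imp x y) (imp x z)) \<and>
     (\<forall>x y. sup (imp x y) (imp (imp x y) (sup (neg x) y)) = top)"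

definition fated_filter :: "('a::bounded_lattice \<Rightarrow> 'a \<Rightarrow> 'a) \<Rightarrow> 'a set \<Rightarrow> bool" where
  "fated_filter imp A \<longleftrightarrow> A \<noteq> {} \<and> top \<in> A \<and>
     (\<forall>x y a. a \<in> A \<longrightarrow> imp a (imp (imp x y) x) \<in> A \<longrightarrow> x \<in> A)"

definition fp_in :: "('a \<Rightarrow> real) \<Rightarrow> 'a \<Rightarrow> real \<Rightarrow> bool" where
  "fp_in mu x t \<longleftrightarrow> mu x \<ge> t"

definition fp_q :: "real \<Rightarrow> ('a \<Rightarrow> real) \<Rightarrow> 'a \<Rightarrow> real \<Rightarrow> bool" where
  "fp_q k mu x t \<longleftrightarrow> mu x + t + k > 1"

definition fp_in_or_q :: "real \<Rightarrow> ('a \<Rightarrow> real) \<Rightarrow> 'a \<Rightarrow> real \<Rightarrow> bool" where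
  "fp_in_or_q k mu x t \<longleftrightarrow> fp_in mu x t \<or> fp_q k mu x t"

definition in_inq_fuzzy_fated_filter ::
  "('a::bounded_lattice \<Rightarrow> 'a \<Rightarrow> 'a) \<Rightarrow> real \<Rightarrow> ('a \<Rightarrow> real) \<Rightarrow> bool" where
  "in_inq_fuzzy_fated_filter imp k mu \<longleftrightarrow>
     (\<forall>x t. 0 < t \<and> t \<le> 1 \<longrightarrow> fp_in mu x t \<longrightarrow> fp_in_or_q k mu top t) \<and>
     (\<forall>x a y t s. 0 < t \<and> t \<le> 1 \<and> 0 < s \<and> s \<le> 1 \<longrightarrow>
        fp_in mu (imp a (imp (imp x y) x)) t \<longrightarrow> fp_in mu a s \<longrightarrow>
        fp_in_or_q k mu x (min t s))"

definition level_set :: "('a \<Rightarrow> real) \<Rightarrow> real \<Rightarrow> 'a set" where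
  "level_set mu t = {x. mu x \<ge> t}"

end

theory Submission
  imports Defs
begin

text \<open>Write \<open>c = (1 - k)/2\<close>. Both sides of the equivalence amount to the two inequalities
  \<open>min (mu x) c \<le> mu 1\<close> and \<open>min (min (mu (a \<rightarrow> ((x \<rightarrow> y) \<rightarrow> x))) (mu a)) c \<le> mu x\<close>.
  On the fuzzy-point side, a point \<open>x\<^sub>t\<close> with \<open>t > c\<close> is quasi-coincident with \<open>mu\<close> as soon as
  \<open>mu x \<ge> c\<close>, because \<open>c + c + k = 1\<close>; on the level-set side, \<open>min u c \<le> v\<close> says exactly that
  every level \<open>t \<in> (0, c]\<close> below \<open>u\<close> is below \<open>v\<close>.\<close>

lemma min_le_iff_in_or_q:
  fixes k u v :: real
  assumes "k < 1" and "0 \<le> v" and "u \<le> 1"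
  shows "(\<forall>t. 0 < t \<and> t \<le> 1 \<longrightarrow> t \<le> u \<longrightarrow> t \<le> v \<or> 1 < v + t + k)
    \<longleftrightarrow> min u ((1 - k) / 2) \<le> v"
proof
  assume H: "\<forall>t. 0 < t \<and> t \<le> 1 \<longrightarrow> t \<le> u \<longrightarrow> t \<le> v \<or> 1 < v + t + k"
  show "min u ((1 - k) / 2) \<le> v"
  proof (rule ccontr)
    assume gt: "\<not> min u ((1 - k) / 2) \<le> v"
    define t where "t = (v + min u ((1 - k) / 2)) / 2"
    have "0 < t" "t \<le> 1" "t \<le> u" "v < t" "t < (1 - k) / 2"
      using gt assms min.cobounded1[of u "(1 - k) / 2"] min.cobounded2[of u "(1 - k) / 2"]
      unfolding t_def by auto
    with H have "t \<le> v \<or> 1 < v + t + k" by blast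
    with \<open>v < t\<close> \<open>t < (1 - k) / 2\<close> show False by (simp add: field_simps)
  qed
next
  assume bound: "min u ((1 - k) / 2) \<le> v"
  show "\<forall>t. 0 < t \<and> t \<le> 1 \<longrightarrow> t \<le> u \<longrightarrow> t \<le> v \<or> 1 < v + t + k"
  proof (intro allI impI)
    fix t assume "0 < t \<and> t \<le> 1" and "t \<le> u"
    show "t \<le> v \<or> 1 < v + t + k"
    proof (cases "t \<le> (1 - k) / 2")
      case True
      with \<open>t \<le> u\<close> bound have "t \<le> v" by linarith
      then show ?thesis ..
    next
      case False
      with \<open>t \<le> u\<close> bound have "(1 - k) / 2 \<le> v" by linarith
      with False have "1 < v + t + k" by (simp add: field_simps)
      then show ?thesis ..
    qed
  qed
qed

lemma all_two_levels_iff_all_min_level: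
  fixes u w :: real
  shows "(\<forall>t s. 0 < t \<and> t \<le> 1 \<and> 0 < s \<and> s \<le> 1 \<longrightarrow> t \<le> u \<longrightarrow> s \<le> w \<longrightarrow> P (min t s))
    \<longleftrightarrow> (\<forall>r. 0 < r \<and> r \<le> 1 \<longrightarrow> r \<le> min u w \<longrightarrow> P r)"
proof
  assume "\<forall>t s. 0 < t \<and> t \<le> 1 \<and> 0 < s \<and> s \<le> 1 \<longrightarrow> t \<le> u \<longrightarrow> s \<le> w \<longrightarrow> P (min t s)"
  then show "\<forall>r. 0 < r \<and> r \<le> 1 \<longrightarrow> r \<le> min u w \<longrightarrow> P r"
    by (metis min.idem min.bounded_iff)
qed (simp add: min.coboundedI1 min.coboundedI2)

lemma in_inq_fuzzy_fated_filter_iff_min_bounds: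
  assumes "k < 1" and "\<forall>x. 0 \<le> mu x \<and> mu x \<le> 1"
  shows "in_inq_fuzzy_fated_filter imp k mu \<longleftrightarrow>
    (\<forall>x. min (mu x) ((1 - k) / 2) \<le> mu top) \<and>
    (\<forall>x y a. min (min (mu (imp a (imp (imp x y) x))) (mu a)) ((1 - k) / 2) \<le> mu x)"
proof -
  have top: "(\<forall>t. 0 < t \<and> t \<le> 1 \<longrightarrow> fp_in mu x t \<longrightarrow> fp_in_or_q k mu top t)
      \<longleftrightarrow> min (mu x) ((1 - k) / 2) \<le> mu top" for x
    using min_le_iff_in_or_q[of k "mu top" "mu x"] assms
    unfolding fp_in_or_q_def fp_in_def fp_q_def by simp
  have mp: "(\<forall>t s. 0 < t \<and> t \<le> 1 \<and> 0 < s \<and> s \<le> 1 \<longrightarrow>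
        fp_in mu (imp a (imp (imp x y) x)) t \<longrightarrow> fp_in mu a s \<longrightarrow> fp_in_or_q k mu x (min t s))
      \<longleftrightarrow> min (min (mu (imp a (imp (imp x y) x))) (mu a)) ((1 - k) / 2) \<le> mu x" for x y a
  proof -
    let ?u = "min (mu (imp a (imp (imp x y) x))) (mu a)"
    have "(\<forall>t s. 0 < t \<and> t \<le> 1 \<and> 0 < s \<and> s \<le> 1 \<longrightarrow>
        fp_in mu (imp a (imp (imp x y) x)) t \<longrightarrow> fp_in mu a s \<longrightarrow> fp_in_or_q k mu x (min t s))
      \<longleftrightarrow> (\<forall>r. 0 < r \<and> r \<le> 1 \<longrightarrow> r \<le> ?u \<longrightarrow> fp_in_or_q k mu x r)"
      unfolding fp_in_def by (rule all_two_levels_iff_all_min_level)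
    also have "\<dots> \<longleftrightarrow> min ?u ((1 - k) / 2) \<le> mu x"
      using min_le_iff_in_or_q[of k "mu x" ?u] assms
      unfolding fp_in_or_q_def fp_in_def fp_q_def by (simp add: min.coboundedI2)
    finally show ?thesis .
  qed
  show ?thesis
    unfolding in_inq_fuzzy_fated_filter_def top mp by blast
qed

lemma level_set_fated_filter_iff:
  "level_set mu t = {} \<or> fated_filter imp (level_set mu t) \<longleftrightarrow>
    (\<forall>x. t \<le> mu x \<longrightarrow> t \<le> mu top) \<and>
    (\<forall>x y a. t \<le> mu (imp a (imp (imp x y) x)) \<longrightarrow> t \<le> mu a \<longrightarrow> t \<le> mu x)"
  (is "_ \<longleftrightarrow> _ \<and> ?mp")
proof (cases "\<exists>x. t \<le> mu x")
  case True
  then have "level_set mu t \<noteq> {}"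
    unfolding level_set_def by simp
  moreover have "fated_filter imp (level_set mu t) \<longleftrightarrow> t \<le> mu top \<and> ?mp"
    unfolding fated_filter_def level_set_def mem_Collect_eq using True by blast
  ultimately show ?thesis
    using True by blast
next
  case False
  then show ?thesis
    unfolding level_set_def by simp
qed

lemma min_le_iff_levels:
  fixes c u v :: real
  assumes "0 \<le> v"
  shows "min u c \<le> v \<longleftrightarrow> (\<forall>t. 0 < t \<and> t \<le> c \<longrightarrow> t \<le> u \<longrightarrow> t \<le> v)"
proof
  assume "\<forall>t. 0 < t \<and> t \<le> c \<longrightarrow> t \<le> u \<longrightarrow> t \<le> v"
  then show "min u c \<le> v"
    using assms by (cases "0 < min u c") auto
qed auto

lemma level_sets_fated_filters_iff_min_bounds:
  assumes "\<forall>x. 0 \<le> mu x"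
  shows "(\<forall>t. 0 < t \<and> t \<le> c \<longrightarrow> level_set mu t = {} \<or> fated_filter imp (level_set mu t)) \<longleftrightarrow>
    (\<forall>x. min (mu x) c \<le> mu top) \<and>
    (\<forall>x y a. min (min (mu (imp a (imp (imp x y) x))) (mu a)) c \<le> mu x)"
  unfolding level_set_fated_filter_iff min_le_iff_levels[OF assms[rule_format]] min.bounded_iff
  by blast

theorem theorem3p12:
  fixes neg :: "'a::{distrib_lattice,bounded_lattice} \<Rightarrow> 'a"
    and imp :: "'a \<Rightarrow> 'a \<Rightarrow> 'a"
    and k :: real and mu :: "'a \<Rightarrow> real"
  assumes "R0_algebra neg imp"
    and "0 \<le> k" and "k < 1"
    and "\<forall>x. 0 \<le> mu x \<and> mu x \<le> 1"
  shows "in_inq_fuzzy_fated_filter imp k mu \<longleftrightarrow>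
    (\<forall>t. 0 < t \<and> t \<le> (1 - k) / 2 \<longrightarrow>
       level_set mu t = {} \<or> fated_filter imp (level_set mu t))"
proof -
  have "\<forall>x. 0 \<le> mu x" using assms(4) by blast
  then show ?thesis
    unfolding in_inq_fuzzy_fated_filter_iff_min_bounds[OF assms(3,4)]
    by (rule level_sets_fated_filters_iff_min_bounds[symmetric])
qed

end
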